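(* Let $\ell\in(\Sigma^S_{n,2d})^*$ and let $W_\ell\subseteq H_{n,d}$ be the kernel of the quadratic form $Q_\ell$. Then $\ell$ spans an extreme ray of $(\Sigma^S_{n,2d})^*$ if and only if $W_\ell^{<2>}$ is a (linear) hyperplane in $H^S_{n,2d}$.
   Context: $H_{n,d}$ is the space of real forms of degree $d$ in $n$ variables and $H^S_{n,2d}$ the symmetric forms of degree $2d$; $\Sigma^S_{n,2d}$ is the cone of symmetric sums of squares of real forms and $(\Sigma^S_{n,2d})^*=\{\ell\in (H^S_{n,2d})^*:\ell(f)\ge 0\ \forall f\in\Sigma^S_{n,2d}\}$. $\operatorname{Sym}(f)=\frac1{n!}\sum_{\sigma\in\mathcal{S}_n}\sigma(f)$ with $\mathcal{S}_n$ permuting variables. $Q_\ell(f)=\ell(\operatorname{Sym}(f^2))$ for $f\in H_{n,d}$; its kernel is $\{p\in H_{n,d}:\ell(\operatorname{Sym}(pq))=0\ \forall q\in H_{n,d}\}$. For a linear subspace $W\subseteq H_{n,d}$, $W^{<2>}=\{\operatorname{Sym}(\sum_i f_ig_i): f_i\in W,\ g_i\in H_{n,d}\}\subseteq H^S_{n,2d}$. *)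

theory Defs
  imports Complex_Main "HOL-Library.Poly_Mapping" "HOL-Combinatorics.Permutations"
begin

text \<open>Real polynomials in the variables x_0, x_1, ...: a monomial is an exponent
  vector (finitely supported nat-valued map), a polynomial is a finitely supported coefficient function
  on monomials; the ring structure is the library's convolution product.\<close>

type_synonym mono = "nat \<Rightarrow>\<^sub>0 nat"
type_synonym rpoly = "mono \<Rightarrow>\<^sub>0 real"

definition mdeg :: "mono \<Rightarrow> nat" where
  "mdeg m = sum (Poly_Mapping.lookup m) (Poly_Mapping.keys m)"

definition forms :: "nat \<Rightarrow> nat \<Rightarrow> rpoly set" where
  "forms n d = {p. \<forall>m\<in>Poly_Mapping.keys p. Poly_Mapping.keys m \<subseteq> {0..<n} \<and> mdeg m = d}"

definition pscale :: "real \<Rightarrow> rpoly \<Rightarrow> rpoly" where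
  "pscale c p = Poly_Mapping.map (\<lambda>x. c * x) p"

text \<open>Action of a permutation of the variables: coefficient of the monomial m in
  perm_act s p is the coefficient of (m o s) in p.\<close>
definition perm_act :: "(nat \<Rightarrow> nat) \<Rightarrow> rpoly \<Rightarrow> rpoly" where
  "perm_act s p = Poly_Mapping.map_key (Poly_Mapping.map_key s) p"

definition Sym :: "nat \<Rightarrow> rpoly \<Rightarrow> rpoly" where
  "Sym n p = pscale (1 / fact n) (\<Sum>s\<in>{s. s permutes {0..<n}}. perm_act s p)"

definition sym_forms :: "nat \<Rightarrow> nat \<Rightarrow> rpoly set" where
  "sym_forms n k = {p \<in> forms n k. \<forall>s. s permutes {0..<n} \<longrightarrow> perm_act s p = p}"

definition sym_sos :: "nat \<Rightarrow> nat \<Rightarrow> rpoly set" where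
  "sym_sos n d = {f \<in> sym_forms n (2*d).
      \<exists>gs. set gs \<subseteq> forms n d \<and> f = sum_list (map (\<lambda>g. g * g) gs)}"

definition linear_on :: "rpoly set \<Rightarrow> (rpoly \<Rightarrow> real) \<Rightarrow> bool" where
  "linear_on S l \<longleftrightarrow> (\<forall>x\<in>S. \<forall>y\<in>S. l (x + y) = l x + l y) \<and>
                      (\<forall>c. \<forall>x\<in>S. l (pscale c x) = c * l x)"

text \<open>(\<Sigma>^S_{n,2d})^*: linear functionals on H^S_{n,2d} nonnegative on \<Sigma>^S_{n,2d}.
  Functionals are functions rpoly \<Rightarrow> real; only their values on H^S_{n,2d} matter.\<close>
definition dual_cone :: "nat \<Rightarrow> nat \<Rightarrow> (rpoly \<Rightarrow> real) set" where
  "dual_cone n d = {l. linear_on (sym_forms n (2*d)) l \<and> (\<forall>f\<in>sym_sos n d. 0 \<le> l f)}"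

definition extreme_ray :: "rpoly set \<Rightarrow> (rpoly \<Rightarrow> real) set \<Rightarrow> (rpoly \<Rightarrow> real) \<Rightarrow> bool" where
  "extreme_ray V K l \<longleftrightarrow> l \<in> K \<and> (\<exists>f\<in>V. l f \<noteq> 0) \<and>
     (\<forall>l1\<in>K. \<forall>l2\<in>K. (\<forall>f\<in>V. l f = l1 f + l2 f) \<longrightarrow>
         (\<exists>c\<ge>0. \<forall>f\<in>V. l1 f = c * l f))"

text \<open>Kernel W_l of the quadratic form Q_l(f) = l(Sym(f^2)) on H_{n,d}.\<close>
definition qf_kernel :: "nat \<Rightarrow> nat \<Rightarrow> (rpoly \<Rightarrow> real) \<Rightarrow> rpoly set" where
  "qf_kernel n d l = {p \<in> forms n d. \<forall>q\<in>forms n d. l (Sym n (p * q)) = 0}"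

definition W2 :: "nat \<Rightarrow> nat \<Rightarrow> rpoly set \<Rightarrow> rpoly set" where
  "W2 n d W = {Sym n (sum_list (map (\<lambda>(f, g). f * g) fgs)) | fgs.
                 set fgs \<subseteq> W \<times> forms n d}"

definition hyperplane_in :: "rpoly set \<Rightarrow> rpoly set \<Rightarrow> bool" where
  "hyperplane_in V U \<longleftrightarrow>
     (\<exists>\<phi>. linear_on V \<phi> \<and> (\<exists>f\<in>V. \<phi> f \<noteq> 0) \<and> U = {f \<in> V. \<phi> f = 0})"

end

theory Submission
  imports Defs
begin

text \<open>The form Q_l(f, g) = l(Sym(f g)) is a positive semidefinite symmetric bilinear form on
  H_{n,d}; its kernel W_l therefore consists of the Q_l-isotropic forms, and l vanishes on W_l^<2>.

  If l spans an extreme ray and some functional m vanished on W_l^<2> but not on the kernel of l,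
  then m(Sym(_ * _)) would be a symmetric bilinear form whose radical contains that of Q_l, hence
  dominated by a multiple of Q_l on the finite-dimensional space H_{n,d}. For small \<epsilon> > 0 both
  l + \<epsilon> m and l - \<epsilon> m would then lie in the dual cone, contradicting extremality; so the kernel of l
  is W_l^<2>, a hyperplane.

  Conversely, let W_l^<2> be a hyperplane and l = l1 + l2 with l1, l2 in the cone. Then
  0 \<le> Q_{l1} \<le> Q_l forces W_l \<subseteq> W_{l1}, so l1 vanishes on W_l^<2> and is a multiple of l; the factor
  is nonnegative because Q_l is not identically zero.\<close>

subsection \<open>Symmetric bilinear forms on real vector spaces\<close>

lemma abs_quadratic_le:
  fixes a q k b0 b1 b2 C D :: real
  assumes a: "a > 0" and q: "q \<ge> 0" and C: "C \<ge> 0" and D: "D \<ge> 0"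
    and b0: "\<bar>b0\<bar> \<le> C * q" and b1: "b1\<^sup>2 \<le> D * q"
  shows "\<bar>b0 + 2 * k * b1 + k\<^sup>2 * b2\<bar> \<le> (C + D / a + 1 + \<bar>b2\<bar> / a) * (q + k\<^sup>2 * a)"
proof -
  have "2 * \<bar>k\<bar> * \<bar>b1\<bar> \<le> k\<^sup>2 * a + b1\<^sup>2 / a"
  proof -
    have "0 \<le> (\<bar>k\<bar> * a - \<bar>b1\<bar>)\<^sup>2" by simp
    then show ?thesis using a by (simp add: field_simps power2_eq_square)
  qed
  moreover have "b1\<^sup>2 / a \<le> D * q / a" using a b1 by (simp add: divide_right_mono)
  moreover have "\<bar>b0 + 2 * k * b1 + k\<^sup>2 * b2\<bar> \<le> \<bar>b0\<bar> + 2 * \<bar>k\<bar> * \<bar>b1\<bar> + k\<^sup>2 * \<bar>b2\<bar>"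
  proof -
    have "\<bar>2 * k * b1\<bar> = 2 * \<bar>k\<bar> * \<bar>b1\<bar>" "\<bar>k\<^sup>2 * b2\<bar> = k\<^sup>2 * \<bar>b2\<bar>"
      by (simp_all add: abs_mult)
    then show ?thesis
      using abs_triangle_ineq[of "b0 + 2 * k * b1" "k\<^sup>2 * b2"] abs_triangle_ineq[of b0 "2 * k * b1"]
      by linarith
  qed
  moreover have "(C + D / a + 1 + \<bar>b2\<bar> / a) * (q + k\<^sup>2 * a) =
      C * q + D * q / a + k\<^sup>2 * a + k\<^sup>2 * \<bar>b2\<bar> + (q * (1 + \<bar>b2\<bar> / a) + C * k\<^sup>2 * a + D * k\<^sup>2)"
    using a by (simp add: field_simps)
  moreover have "0 \<le> q * (1 + \<bar>b2\<bar> / a) + C * k\<^sup>2 * a + D * k\<^sup>2"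
    using a q C D by simp
  ultimately show ?thesis using b0 by linarith
qed

locale real_vector_space = vector_space scale
  for scale :: "real \<Rightarrow> 'b::ab_group_add \<Rightarrow> 'b" (infixr \<open>*s\<close> 75)
begin

lemma exists_linear_functional_separating:
  assumes S: "subspace S" and x: "x \<notin> S"
  obtains m where "Vector_Spaces.linear scale (*) m" "m x = 1" "\<And>y. y \<in> S \<Longrightarrow> m y = 0"
proof -
  interpret pair: vector_space_pair scale "(*) :: real \<Rightarrow> real \<Rightarrow> real"
    by unfold_locales (simp_all add: algebra_simps)
  obtain B where B: "B \<subseteq> S" "independent B" "S \<subseteq> span B"
    by (rule maximal_independent_subset)
  have span_B: "span B = S"
    using span_minimal[OF B(1) S] B(3) by blast
  then have indep: "independent (insert x B)"
    using x B(2) by (intro independent_insertI) auto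
  obtain m where m: "Vector_Spaces.linear scale (*) m" "\<forall>y\<in>insert x B. m y = (if y = x then 1 else 0)"
    using pair.linear_independent_extend[OF indep, of "\<lambda>y. if y = x then 1 else 0"] by blast
  have "m y = 0" if "y \<in> B" for y
    using m(2) that x B(1) by auto
  then have "m y = 0" if "y \<in> S" for y
    using pair.linear_eq_0_on_span[OF m(1)] that span_B by blast
  with m show thesis using that by auto
qed

lemma subspace_sum_list: "subspace S \<Longrightarrow> set xs \<subseteq> S \<Longrightarrow> sum_list xs \<in> S"
  by (induction xs) (auto simp: subspace_0 subspace_add)

lemma span_insert_shifted:
  "span (insert e S) \<subseteq> span (insert e ((\<lambda>x. x - f x *s e) ` S))"
proof (rule span_minimal[OF _ subspace_span], rule subsetI)
  fix x assume "x \<in> insert e S"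
  then consider "x = e" | "x \<in> S" by blast
  then show "x \<in> span (insert e ((\<lambda>x. x - f x *s e) ` S))"
  proof cases
    case 2
    then have "(x - f x *s e) + f x *s e \<in> span (insert e ((\<lambda>x. x - f x *s e) ` S))"
      by (intro span_add span_scale span_base) auto
    then show ?thesis by simp
  qed (simp add: span_base)
qed

definition symmetric_bilinear_on :: "'b set \<Rightarrow> ('b \<Rightarrow> 'b \<Rightarrow> real) \<Rightarrow> bool" where
  "symmetric_bilinear_on H B \<longleftrightarrow>
     (\<forall>x\<in>H. \<forall>y\<in>H. \<forall>z\<in>H. B (x + y) z = B x z + B y z) \<and>
     (\<forall>c. \<forall>x\<in>H. \<forall>z\<in>H. B (c *s x) z = c * B x z) \<and>
     (\<forall>x\<in>H. \<forall>y\<in>H. B x y = B y x)"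

context
  fixes H B
  assumes H: "subspace H" and B: "symmetric_bilinear_on H B"
begin

lemma bilinear_add_left: "x \<in> H \<Longrightarrow> y \<in> H \<Longrightarrow> z \<in> H \<Longrightarrow> B (x + y) z = B x z + B y z"
  using B by (simp add: symmetric_bilinear_on_def)

lemma bilinear_scale_left: "x \<in> H \<Longrightarrow> z \<in> H \<Longrightarrow> B (c *s x) z = c * B x z"
  using B by (simp add: symmetric_bilinear_on_def)

lemma bilinear_commute: "x \<in> H \<Longrightarrow> y \<in> H \<Longrightarrow> B x y = B y x"
  using B by (simp add: symmetric_bilinear_on_def)

lemma bilinear_add_right: "x \<in> H \<Longrightarrow> y \<in> H \<Longrightarrow> z \<in> H \<Longrightarrow> B z (x + y) = B z x + B z y"
  using bilinear_commute bilinear_add_left subspace_add[OF H] by metis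

lemma bilinear_scale_right: "x \<in> H \<Longrightarrow> z \<in> H \<Longrightarrow> B z (c *s x) = c * B z x"
  using bilinear_commute bilinear_scale_left subspace_scale[OF H] by metis

lemma bilinear_zero_left: "z \<in> H \<Longrightarrow> B 0 z = 0"
  using bilinear_scale_left[of 0 z 0] subspace_0[OF H] by simp

lemma bilinear_zero_right: "z \<in> H \<Longrightarrow> B z 0 = 0"
  using bilinear_zero_left bilinear_commute subspace_0[OF H] by metis

lemma bilinear_square_add_scale:
  assumes h: "h \<in> H" and e: "e \<in> H"
  shows "B (h + k *s e) (h + k *s e) = B h h + 2 * k * B e h + k\<^sup>2 * B e e"
proof -
  have ke: "k *s e \<in> H" using H e by (rule subspace_scale)
  have "B (h + k *s e) (h + k *s e) = B h h + B h (k *s e) + (B (k *s e) h + B (k *s e) (k *s e))"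
    using h ke subspace_add[OF H h ke]
    by (simp add: bilinear_add_left bilinear_add_right)
  also have "\<dots> = B h h + 2 * k * B e h + k\<^sup>2 * B e e"
    using h e ke by (simp add: bilinear_scale_left bilinear_scale_right bilinear_commute[of h e]
        power2_eq_square algebra_simps)
  finally show ?thesis .
qed

lemma symmetric_bilinear_on_product:
  assumes "e \<in> H"
  shows "symmetric_bilinear_on H (\<lambda>x y. B e x * B e y)"
  using assms by (auto simp: symmetric_bilinear_on_def bilinear_add_right bilinear_scale_right algebra_simps)

lemma subspace_orthogonal:
  assumes "e \<in> H"
  shows "subspace {x \<in> H. B e x = 0}"
  using assms subspace_0[OF H] subspace_add[OF H] subspace_scale[OF H]
  by (auto simp: subspace_def bilinear_zero_right bilinear_add_right bilinear_scale_right)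

end

context
  fixes H Q
  assumes H: "subspace H" and Q: "symmetric_bilinear_on H Q" and psd: "\<forall>x\<in>H. 0 \<le> Q x x"
begin

lemma psd_isotropic_orthogonal:
  assumes w: "w \<in> H" and ww: "Q w w = 0" and x: "x \<in> H"
  shows "Q w x = 0"
proof (rule ccontr)
  assume ne: "Q w x \<noteq> 0"
  define t where "t = - Q w x / (Q x x + 1)"
  have "Q (w + t *s x) (w + t *s x) = 2 * t * Q w x + t\<^sup>2 * Q x x"
    using bilinear_square_add_scale[OF H Q w x] bilinear_commute[OF H Q x w] ww by simp
  also have "\<dots> = (Q w x)\<^sup>2 * (- Q x x - 2) / (Q x x + 1)\<^sup>2"
    using psd x by (simp add: t_def field_simps power2_eq_square add_nonneg_eq_0_iff)
  also have "\<dots> < 0"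
    using ne psd x by (intro divide_neg_pos mult_pos_neg) auto
  finally show False
    using psd subspace_add[OF H w subspace_scale[OF H x, of t]] by (meson not_le)
qed

lemma dominated_insert_isotropic:
  assumes S: "S \<subseteq> H" and e: "e \<in> H" "Q e e = 0"
    and B: "symmetric_bilinear_on H B" and Be: "\<forall>x\<in>H. B e x = 0"
    and dom: "\<forall>g\<in>span S. \<bar>B g g\<bar> \<le> C * Q g g"
  shows "\<forall>g\<in>span (insert e S). \<bar>B g g\<bar> \<le> C * Q g g"
proof
  fix g assume "g \<in> span (insert e S)"
  then obtain k where h: "g - k *s e \<in> span S"
    by (auto simp: span_insert)
  define h where "h = g - k *s e"
  have hH: "h \<in> H" using span_minimal[OF S H] h h_def by blast
  have g: "g = h + k *s e" by (simp add: h_def)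
  have Qe: "Q e x = 0" if "x \<in> H" for x using psd_isotropic_orthogonal[OF e that] .
  have "\<bar>B g g\<bar> = \<bar>B h h\<bar>" unfolding g by (simp add: bilinear_square_add_scale[OF H B hH e(1)] Be hH e)
  also have "\<dots> \<le> C * Q h h" using dom h h_def by blast
  also have "\<dots> = C * Q g g" unfolding g by (simp add: bilinear_square_add_scale[OF H Q hH e(1)] Qe hH e)
  finally show "\<bar>B g g\<bar> \<le> C * Q g g" .
qed

lemma dominated_insert_anisotropic:
  assumes S: "S \<subseteq> H" and e: "e \<in> H" and a: "Q e e > 0" and orth: "\<forall>x\<in>S. Q e x = 0"
    and B: "symmetric_bilinear_on H B"
    and dom: "\<forall>g\<in>span S. \<bar>B g g\<bar> \<le> C * Q g g" "C \<ge> 0"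
    and dom_e: "\<forall>g\<in>span S. \<bar>B e g * B e g\<bar> \<le> D * Q g g" "D \<ge> 0"
  shows "\<exists>C'\<ge>0. \<forall>g\<in>span (insert e S). \<bar>B g g\<bar> \<le> C' * Q g g"
proof (intro exI conjI ballI)
  let ?a = "Q e e"
  define C' where "C' = C + D / ?a + 1 + \<bar>B e e\<bar> / ?a"
  show "C' \<ge> 0" using a dom(2) dom_e(2) by (simp add: C'_def)
  fix g assume "g \<in> span (insert e S)"
  then obtain k where h: "g - k *s e \<in> span S"
    by (auto simp: span_insert)
  define h where "h = g - k *s e"
  have "h \<in> {x \<in> H. Q e x = 0}"
    using span_minimal[OF _ subspace_orthogonal[OF H Q e]] S orth h h_def by blast
  then have hH: "h \<in> H" and Qeh: "Q e h = 0" by auto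
  have g: "g = h + k *s e" by (simp add: h_def)
  have "\<bar>B h h + 2 * k * B e h + k\<^sup>2 * B e e\<bar> \<le> C' * (Q h h + k\<^sup>2 * ?a)"
    unfolding C'_def
  proof (rule abs_quadratic_le)
    show "\<bar>B h h\<bar> \<le> C * Q h h" using dom h h_def by blast
    show "(B e h)\<^sup>2 \<le> D * Q h h" using dom_e h h_def by (simp add: power2_eq_square)
  qed (use a dom(2) dom_e(2) psd hH in auto)
  then show "\<bar>B g g\<bar> \<le> C' * Q g g"
    unfolding g by (simp add: bilinear_square_add_scale[OF H B hH e] bilinear_square_add_scale[OF H Q hH e] Qeh)
qed

text \<open>The constant comes from Gram--Schmidt with respect to Q along a spanning list; the anisotropic
  step needs the bound both for B and for the rank-one form B e _ * B e _, which is why B is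
  generalised in the induction.\<close>
lemma psd_dominates_on_span:
  assumes "set es \<subseteq> H" and "symmetric_bilinear_on H B"
    and "\<forall>w\<in>H. Q w w = 0 \<longrightarrow> (\<forall>x\<in>H. B w x = 0)"
  shows "\<exists>C\<ge>0. \<forall>g\<in>span (set es). \<bar>B g g\<bar> \<le> C * Q g g"
  using assms
proof (induction "length es" arbitrary: es B)
  case 0
  then show ?case using bilinear_zero_left[OF H \<open>symmetric_bilinear_on H B\<close> subspace_0[OF H]] by auto
next
  case (Suc N)
  then obtain e rest where es: "es = e # rest" and len: "length rest = N"
    by (cases es) auto
  have e: "e \<in> H" and rest: "set rest \<subseteq> H" using Suc.prems(1) es by auto
  note B = Suc.prems(2) and B_iso = Suc.prems(3)
  show ?case
  proof (cases "Q e e = 0")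
    case True
    obtain C where C: "C \<ge> 0" "\<forall>g\<in>span (set rest). \<bar>B g g\<bar> \<le> C * Q g g"
      using Suc.hyps(1)[OF len[symmetric] rest B B_iso] by blast
    have "\<forall>x\<in>H. B e x = 0" using B_iso e True by blast
    with dominated_insert_isotropic[OF rest e True B _ C(2)] C(1) show ?thesis
      by (auto simp: es)
  next
    case False
    then have a: "Q e e > 0" using psd e by (simp add: order_less_le)
    define rest' where "rest' = map (\<lambda>x. x - (Q e x / Q e e) *s e) rest"
    have rest'H: "set rest' \<subseteq> H"
      using rest e by (auto simp: rest'_def subspace_diff[OF H] subspace_scale[OF H])
    have orth: "\<forall>x\<in>set rest'. Q e x = 0"
      using rest e a subspace_scale[OF H e]
      by (auto simp: rest'_def diff_conv_add_uminus bilinear_add_right[OF H Q] bilinear_scale_right[OF H Q]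
          simp flip: scale_minus_left)
    have len': "N = length rest'" using len by (simp add: rest'_def)
    obtain C where C: "C \<ge> 0" "\<forall>g\<in>span (set rest'). \<bar>B g g\<bar> \<le> C * Q g g"
      using Suc.hyps(1)[OF len' rest'H B B_iso] by blast
    have B_iso_e: "\<forall>w\<in>H. Q w w = 0 \<longrightarrow> (\<forall>x\<in>H. B e w * B e x = 0)"
      using B_iso e by (auto simp: bilinear_commute[OF H B e])
    obtain D where D: "D \<ge> 0" "\<forall>g\<in>span (set rest'). \<bar>B e g * B e g\<bar> \<le> D * Q g g"
      using Suc.hyps(1)[OF len' rest'H symmetric_bilinear_on_product[OF H B e] B_iso_e] by blast
    have "span (set es) \<subseteq> span (insert e (set rest'))"
      using span_insert_shifted[of e "set rest" "\<lambda>x. Q e x / Q e e"] by (simp add: es rest'_def)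
    with dominated_insert_anisotropic[OF rest'H e a orth B C(2,1) D(2,1)] show ?thesis
      by blast
  qed
qed

end

end


subsection \<open>Forms\<close>

lemma pscale_conv_mult: "pscale c p = Poly_Mapping.single 0 c * p"
  unfolding pscale_def using mult_map_scale_conv_mult[of c p] by (simp add: fun_eq_iff)

lemma lookup_pscale [simp]: "Poly_Mapping.lookup (pscale c p) m = c * Poly_Mapping.lookup p m"
  unfolding pscale_def by (simp add: Poly_Mapping.map.rep_eq when_def)

interpretation PV: real_vector_space pscale
  by unfold_locales
    (simp_all add: pscale_conv_mult algebra_simps single_add mult_single flip: mult.assoc)

lemma pscale_mult_left: "pscale c p * q = pscale c (p * q)"
  by (simp add: pscale_conv_mult mult.assoc)

lemma pscale_mult_right: "p * pscale c q = pscale c (p * q)"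
  by (simp add: pscale_conv_mult mult.left_commute)

lemma pscale_sum_list: "pscale c (sum_list xs) = sum_list (map (pscale c) xs)"
  by (induction xs) (auto simp: PV.scale_right_distrib)

lemma keys_add_nat: "Poly_Mapping.keys (a + b :: 'a \<Rightarrow>\<^sub>0 nat) = Poly_Mapping.keys a \<union> Poly_Mapping.keys b"
  by (auto simp: in_keys_iff lookup_add)

lemma mdeg_eq_sum: "finite S \<Longrightarrow> Poly_Mapping.keys m \<subseteq> S \<Longrightarrow> mdeg m = sum (Poly_Mapping.lookup m) S"
  unfolding mdeg_def by (rule sum.mono_neutral_left) (auto simp: in_keys_iff)

lemma mdeg_add: "mdeg (a + b) = mdeg a + mdeg b"
proof -
  let ?S = "Poly_Mapping.keys a \<union> Poly_Mapping.keys b"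
  have "mdeg (a + b) = sum (Poly_Mapping.lookup (a + b)) ?S"
    by (rule mdeg_eq_sum) (auto simp: keys_add_nat)
  also have "\<dots> = sum (Poly_Mapping.lookup a) ?S + sum (Poly_Mapping.lookup b) ?S"
    by (simp add: lookup_add sum.distrib)
  also have "\<dots> = mdeg a + mdeg b"
    by (simp add: mdeg_eq_sum[of ?S a] mdeg_eq_sum[of ?S b])
  finally show ?thesis .
qed

lemma mdeg_zero [simp]: "mdeg 0 = 0"
  by (simp add: mdeg_def)

lemma mdeg_single [simp]: "mdeg (Poly_Mapping.single k v) = v"
  by (simp add: mdeg_def)

lemma lookup_le_mdeg: "Poly_Mapping.lookup m k \<le> mdeg m"
  by (cases "k \<in> Poly_Mapping.keys m") (auto simp: mdeg_def in_keys_iff intro: member_le_sum)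

lemma mdeg_split:
  assumes "mdeg m = a + b"
  obtains m1 m2 where "m = m1 + m2" "mdeg m1 = a" "mdeg m2 = b"
    "Poly_Mapping.keys m1 \<subseteq> Poly_Mapping.keys m" "Poly_Mapping.keys m2 \<subseteq> Poly_Mapping.keys m"
  using assms
proof (induction a arbitrary: m thesis)
  case 0
  then show ?case by (metis add_0 mdeg_zero order_refl empty_subsetI keys_zero)
next
  case (Suc a)
  then obtain k where k: "k \<in> Poly_Mapping.keys m"
    unfolding mdeg_def by (metis sum.neutral in_keys_iff nat.simps(3) add_Suc)
  define m' where "m' = m - Poly_Mapping.single k 1"
  have mm: "m = Poly_Mapping.single k 1 + m'"
    using k by (intro poly_mapping_eqI)
      (auto simp: m'_def lookup_add lookup_minus lookup_single when_def in_keys_iff)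
  then have "mdeg m' = a + b" using Suc.prems(2) mdeg_add[of "Poly_Mapping.single k 1" m'] by simp
  then obtain m1 m2 where h: "m' = m1 + m2" "mdeg m1 = a" "mdeg m2 = b"
    "Poly_Mapping.keys m1 \<subseteq> Poly_Mapping.keys m'" "Poly_Mapping.keys m2 \<subseteq> Poly_Mapping.keys m'"
    using Suc.IH by blast
  have km': "Poly_Mapping.keys m' \<subseteq> Poly_Mapping.keys m" by (metis Un_upper2 keys_add_nat mm)
  show ?case
  proof (rule Suc.prems(1))
    show "m = (Poly_Mapping.single k 1 + m1) + m2" by (simp add: mm h(1) add.assoc)
    show "mdeg (Poly_Mapping.single k 1 + m1) = Suc a" using h(2) by (simp add: mdeg_add)
    show "Poly_Mapping.keys (Poly_Mapping.single k 1 + m1) \<subseteq> Poly_Mapping.keys m"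
      using k h(4) km' by (auto simp: keys_add_nat)
  qed (use h km' in auto)
qed

lemma finite_monomials: "finite {m::mono. Poly_Mapping.keys m \<subseteq> {0..<n} \<and> mdeg m = d}"
proof -
  let ?M = "{m::mono. Poly_Mapping.keys m \<subseteq> {0..<n} \<and> mdeg m = d}"
  let ?f = "\<lambda>m::mono. restrict (Poly_Mapping.lookup m) {0..<n}"
  have "?f ` ?M \<subseteq> PiE {0..<n} (\<lambda>_. {0..d})"
    using lookup_le_mdeg by (auto simp: PiE_def)
  moreover have "inj_on ?f ?M"
  proof (rule inj_onI, rule poly_mapping_eqI)
    fix x y k assume x: "x \<in> ?M" and y: "y \<in> ?M" and e: "?f x = ?f y"
    show "Poly_Mapping.lookup x k = Poly_Mapping.lookup y k"
    proof (cases "k < n")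
      case True
      then show ?thesis using fun_cong[OF e, of k] by simp
    next
      case False
      then have "k \<notin> Poly_Mapping.keys x" "k \<notin> Poly_Mapping.keys y" using x y by auto
      then show ?thesis by (simp add: in_keys_iff)
    qed
  qed
  ultimately show ?thesis
    by (meson finite_PiE finite_atLeastAtMost finite_atLeastLessThan finite_imageD finite_subset)
qed

lemma poly_eq_sum_monomials:
  "p = (\<Sum>m\<in>Poly_Mapping.keys p. Poly_Mapping.single m (Poly_Mapping.lookup p m))"
  by (rule poly_mapping_eqI) (auto simp: lookup_sum lookup_single when_def in_keys_iff)

lemma keys_pscale: "Poly_Mapping.keys (pscale c p) \<subseteq> Poly_Mapping.keys p"
  by (auto simp: in_keys_iff)

lemma subspace_forms: "PV.subspace (forms n d)"
  unfolding PV.subspace_def forms_def using keys_add keys_pscale by fastforce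

lemma forms_mult: "p \<in> forms n a \<Longrightarrow> q \<in> forms n b \<Longrightarrow> p * q \<in> forms n (a + b)"
  using keys_mult[of p q] by (fastforce simp: forms_def keys_add_nat mdeg_add)

lemma forms_mult_same: "p \<in> forms n d \<Longrightarrow> q \<in> forms n d \<Longrightarrow> p * q \<in> forms n (2 * d)"
  using forms_mult[of p n d q d] by (simp add: mult_2)

lemma single_in_forms:
  "Poly_Mapping.keys m \<subseteq> {0..<n} \<Longrightarrow> mdeg m = d \<Longrightarrow> Poly_Mapping.single m c \<in> forms n d"
  by (auto simp: forms_def)

lemma forms_finite_dimensional: "\<exists>es. set es \<subseteq> forms n d \<and> forms n d \<subseteq> PV.span (set es)"
proof -
  obtain ms where ms: "set ms = {m::mono. Poly_Mapping.keys m \<subseteq> {0..<n} \<and> mdeg m = d}"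
    using finite_list[OF finite_monomials] by blast
  let ?es = "map (\<lambda>m. Poly_Mapping.single m (1::real)) ms"
  have "p \<in> PV.span (set ?es)" if p: "p \<in> forms n d" for p
  proof -
    have "p = (\<Sum>m\<in>Poly_Mapping.keys p. pscale (Poly_Mapping.lookup p m) (Poly_Mapping.single m 1))"
      by (subst poly_eq_sum_monomials) (simp add: pscale_conv_mult mult_single)
    also have "\<dots> \<in> PV.span (set ?es)"
      using p ms by (intro PV.span_sum PV.span_scale PV.span_base) (auto simp: forms_def)
    finally show ?thesis .
  qed
  moreover have "set ?es \<subseteq> forms n d" using ms by (auto intro: single_in_forms)
  ultimately show ?thesis by blast
qed

lemma forms_double_degree_sum_products:
  assumes "h \<in> forms n (2 * d)"
  obtains fgs where "set fgs \<subseteq> forms n d \<times> forms n d" "h = sum_list (map (\<lambda>(f, g). f * g) fgs)"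
proof -
  have "\<exists>fg. fg \<in> forms n d \<times> forms n d \<and>
      Poly_Mapping.single m (Poly_Mapping.lookup h m) = fst fg * snd fg"
    if m: "m \<in> Poly_Mapping.keys h" for m
  proof -
    have "mdeg m = d + d" "Poly_Mapping.keys m \<subseteq> {0..<n}" using assms m by (auto simp: forms_def)
    then obtain m1 m2 where mm: "m = m1 + m2" "mdeg m1 = d" "mdeg m2 = d"
      "Poly_Mapping.keys m1 \<subseteq> {0..<n}" "Poly_Mapping.keys m2 \<subseteq> {0..<n}"
      by (metis mdeg_split order_trans)
    show ?thesis
      by (rule exI[of _ "(Poly_Mapping.single m1 (Poly_Mapping.lookup h m), Poly_Mapping.single m2 1)"])
        (simp add: mm single_in_forms mult_single)
  qed
  then obtain FG where FG: "\<forall>m\<in>Poly_Mapping.keys h. FG m \<in> forms n d \<times> forms n d \<and>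
      Poly_Mapping.single m (Poly_Mapping.lookup h m) = fst (FG m) * snd (FG m)"
    by metis
  obtain ms where ms: "set ms = Poly_Mapping.keys h" "distinct ms"
    using finite_distinct_list[OF finite_keys[of h]] by blast
  show thesis
  proof
    show "set (map FG ms) \<subseteq> forms n d \<times> forms n d" using ms FG by auto
    have "h = (\<Sum>m\<in>Poly_Mapping.keys h. fst (FG m) * snd (FG m))"
      using FG by (subst poly_eq_sum_monomials) (intro sum.cong refl, blast)
    also have "\<dots> = sum_list (map (\<lambda>(f, g). f * g) (map FG ms))"
      using ms by (simp add: sum_list_distinct_conv_sum_set o_def case_prod_beta)
    finally show "h = sum_list (map (\<lambda>(f, g). f * g) (map FG ms))" .
  qed
qed

subsection \<open>Symmetrization\<close>

lemma bij_map_key_perm: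
  assumes s: "s permutes {0..<n}"
  shows "bij (Poly_Mapping.map_key s :: mono \<Rightarrow> mono)"
proof -
  have i: "inj s" "inj (inv s)" using s by (auto intro: permutes_inj permutes_inv)
  have "Poly_Mapping.map_key (inv s) (Poly_Mapping.map_key s m) = m"
    "Poly_Mapping.map_key s (Poly_Mapping.map_key (inv s) m) = m" for m :: mono
    using i by (simp_all add: map_key_compose permutes_inv_o[OF s] id_def map_key_id)
  then show ?thesis by (metis bij_betw_byWitness top_greatest image_subsetI UNIV_I)
qed

lemma inj_map_key_perm: "s permutes {0..<n} \<Longrightarrow> inj (Poly_Mapping.map_key s :: mono \<Rightarrow> mono)"
  using bij_map_key_perm bij_is_inj by blast

lemma lookup_perm_act:
  "s permutes {0..<n} \<Longrightarrow> Poly_Mapping.lookup (perm_act s p) m = Poly_Mapping.lookup p (Poly_Mapping.map_key s m)"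
  unfolding perm_act_def by (simp add: Poly_Mapping.map_key.rep_eq inj_map_key_perm)

lemma perm_act_add: "s permutes {0..<n} \<Longrightarrow> perm_act s (p + q) = perm_act s p + perm_act s q"
  by (rule poly_mapping_eqI) (simp add: lookup_perm_act lookup_add)

lemma perm_act_pscale: "s permutes {0..<n} \<Longrightarrow> perm_act s (pscale c p) = pscale c (perm_act s p)"
  by (rule poly_mapping_eqI) (simp add: lookup_perm_act)

lemma perm_act_zero: "s permutes {0..<n} \<Longrightarrow> perm_act s 0 = 0"
  by (rule poly_mapping_eqI) (simp add: lookup_perm_act)

lemma perm_act_sum: "s permutes {0..<n} \<Longrightarrow> perm_act s (sum f A) = (\<Sum>x\<in>A. perm_act s (f x))"
  by (induction A rule: infinite_finite_induct) (auto simp: perm_act_zero perm_act_add)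

lemma perm_act_comp:
  assumes s: "s permutes {0..<n}" and t: "t permutes {0..<n}"
  shows "perm_act s (perm_act t p) = perm_act (s \<circ> t) p"
  by (rule poly_mapping_eqI)
    (simp add: lookup_perm_act[OF s] lookup_perm_act[OF t] lookup_perm_act[OF permutes_compose[OF t s]]
      map_key_compose permutes_inj[OF s] permutes_inj[OF t])

lemma perm_act_mult:
  assumes s: "s permutes {0..<n}"
  shows "perm_act s (p * q) = perm_act s p * perm_act s q"
proof (rule poly_mapping_eqI)
  fix m
  let ?g = "Poly_Mapping.map_key s :: mono \<Rightarrow> mono"
  have b: "bij ?g" by (rule bij_map_key_perm[OF s])
  have plus: "?g (a + b) = ?g a + ?g b" for a b
    using map_key_plus permutes_inj[OF s] by blast
  have inner: "(\<Sum>r. Poly_Mapping.lookup q r when ?g m = ?g l + r) =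
               (\<Sum>r. Poly_Mapping.lookup q (?g r) when m = l + r)" for l
    by (rule Sum_any.reindex_cong[OF b])
      (use bij_is_inj[OF b] in \<open>auto simp: fun_eq_iff plus[symmetric] inj_eq when_def\<close>)
  have "Poly_Mapping.lookup (perm_act s (p * q)) m =
      (\<Sum>l. Poly_Mapping.lookup p l * (\<Sum>r. Poly_Mapping.lookup q r when ?g m = l + r))"
    by (simp add: lookup_perm_act[OF s] lookup_mult)
  also have "\<dots> = (\<Sum>l. Poly_Mapping.lookup p (?g l) * (\<Sum>r. Poly_Mapping.lookup q r when ?g m = ?g l + r))"
    by (rule Sum_any.reindex_cong[OF b]) (simp add: fun_eq_iff)
  also have "\<dots> = Poly_Mapping.lookup (perm_act s p * perm_act s q) m"
    by (simp add: inner lookup_perm_act[OF s] lookup_mult)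
  finally show "Poly_Mapping.lookup (perm_act s (p * q)) m = Poly_Mapping.lookup (perm_act s p * perm_act s q) m" .
qed

lemma mdeg_map_key_perm:
  assumes s: "s permutes {0..<n}"
  shows "mdeg (Poly_Mapping.map_key s m) = mdeg m"
proof -
  have "mdeg (Poly_Mapping.map_key s m) = sum (\<lambda>x. Poly_Mapping.lookup m (s x)) (s -` Poly_Mapping.keys m)"
    unfolding mdeg_def using permutes_inj[OF s] by (simp add: keys_map_key Poly_Mapping.map_key.rep_eq)
  also have "\<dots> = mdeg m" unfolding mdeg_def
    by (rule sum.reindex_bij_betw)
      (use permutes_bij[OF s] in \<open>auto simp: bij_betw_def bij_def intro: inj_on_subset\<close>)
  finally show ?thesis .
qed

lemma perm_act_forms:
  assumes s: "s permutes {0..<n}" and p: "p \<in> forms n d"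
  shows "perm_act s p \<in> forms n d"
  unfolding forms_def
proof safe
  fix m assume "m \<in> Poly_Mapping.keys (perm_act s p)"
  then have "Poly_Mapping.map_key s m \<in> Poly_Mapping.keys p"
    by (simp add: in_keys_iff lookup_perm_act[OF s])
  then have "Poly_Mapping.keys (Poly_Mapping.map_key s m) \<subseteq> {0..<n}"
    and dg: "mdeg (Poly_Mapping.map_key s m) = d"
    using p by (auto simp: forms_def)
  then have k: "s -` Poly_Mapping.keys m \<subseteq> {0..<n}"
    by (simp add: keys_map_key[OF permutes_inj[OF s]])
  show "mdeg m = d" using dg mdeg_map_key_perm[OF s] by simp
  fix k assume "k \<in> Poly_Mapping.keys m"
  then have "inv s k \<in> {0..<n}" using k permutes_inverses(1)[OF s] by (metis subsetD vimageI)
  then show "k \<in> {0..<n}" using permutes_in_image[OF s] permutes_inverses(1)[OF s] by metis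
qed

lemma Sym_add: "Sym n (p + q) = Sym n p + Sym n q"
  unfolding Sym_def by (simp add: perm_act_add sum.distrib PV.scale_right_distrib)

lemma Sym_pscale: "Sym n (pscale c p) = pscale c (Sym n p)"
  unfolding Sym_def by (simp add: perm_act_pscale PV.scale_sum_right mult.commute)

lemma Sym_zero [simp]: "Sym n 0 = 0"
  unfolding Sym_def by (simp add: perm_act_zero)

lemma Sym_sum_list: "Sym n (sum_list xs) = sum_list (map (Sym n) xs)"
  by (induction xs) (auto simp: Sym_add)

lemma perm_act_Sym:
  assumes t: "t permutes {0..<n}"
  shows "perm_act t (Sym n p) = Sym n p"
proof -
  have "perm_act t (\<Sum>s | s permutes {0..<n}. perm_act s p) = (\<Sum>s | s permutes {0..<n}. perm_act (t \<circ> s) p)"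
    using t by (simp add: perm_act_sum perm_act_comp)
  also have "\<dots> = (\<Sum>s | s permutes {0..<n}. perm_act s p)"
    by (rule sum.reindex_bij_witness[of _ "\<lambda>s. inv t \<circ> s" "\<lambda>s. t \<circ> s"])
      (use t in \<open>auto simp: o_assoc permutes_inv_o permutes_compose permutes_inv\<close>)
  finally show ?thesis unfolding Sym_def using t by (simp add: perm_act_pscale)
qed

lemma Sym_in_sym_forms: "p \<in> forms n k \<Longrightarrow> Sym n p \<in> sym_forms n k"
  unfolding sym_forms_def Sym_def
  by (auto intro!: PV.subspace_scale[OF subspace_forms] PV.subspace_sum[OF subspace_forms]
      perm_act_forms simp: perm_act_Sym[unfolded Sym_def])

lemma Sym_sym_form:
  assumes "p \<in> sym_forms n k"
  shows "Sym n p = p"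
proof -
  have "(\<Sum>s | s permutes {0..<n}. perm_act s p) = (\<Sum>s | s permutes {0..<n}. pscale 1 p)"
    using assms by (intro sum.cong) (auto simp: sym_forms_def)
  also have "\<dots> = pscale (fact n) p"
    by (simp only: PV.scale_sum_left[symmetric]) (simp add: card_permutations)
  finally show ?thesis unfolding Sym_def by simp
qed

lemma subspace_sym_forms: "PV.subspace (sym_forms n k)"
  using subspace_forms[of n k]
  unfolding PV.subspace_def sym_forms_def by (auto simp: perm_act_add perm_act_pscale perm_act_zero)

lemma Sym_mult_in_sym_forms: "p \<in> forms n d \<Longrightarrow> q \<in> forms n d \<Longrightarrow> Sym n (p * q) \<in> sym_forms n (2 * d)"
  by (intro Sym_in_sym_forms forms_mult_same)

lemma Sym_square_in_sym_sos:
  assumes g: "g \<in> forms n d"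
  shows "Sym n (g * g) \<in> sym_sos n d"
proof -
  define c where "c = sqrt (1 / fact n)"
  have cc: "c * c = 1 / fact n" unfolding c_def by (simp flip: real_sqrt_mult)
  obtain ss where ss: "set ss = {s. s permutes {0..<n}}" "distinct ss"
    using finite_distinct_list[OF finite_permutations[of "{0..<n}"]] by auto
  have "Sym n (g * g) = (\<Sum>s | s permutes {0..<n}. pscale (c * c) (perm_act s g * perm_act s g))"
    unfolding Sym_def cc by (simp add: perm_act_mult PV.scale_sum_right)
  also have "\<dots> = (\<Sum>s | s permutes {0..<n}. pscale c (perm_act s g) * pscale c (perm_act s g))"
    by (simp add: pscale_mult_left pscale_mult_right)
  also have "\<dots> = sum_list (map (\<lambda>h. h * h) (map (\<lambda>s. pscale c (perm_act s g)) ss))"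
    using ss by (simp add: sum_list_distinct_conv_sum_set o_def)
  finally have "Sym n (g * g) = sum_list (map (\<lambda>h. h * h) (map (\<lambda>s. pscale c (perm_act s g)) ss))" .
  moreover have "set (map (\<lambda>s. pscale c (perm_act s g)) ss) \<subseteq> forms n d"
    using g ss(1) by (auto intro: PV.subspace_scale[OF subspace_forms] perm_act_forms)
  ultimately show ?thesis
    unfolding sym_sos_def using Sym_mult_in_sym_forms[OF g g] by blast
qed

lemma sym_sos_eq_sum_Sym_squares:
  assumes "f \<in> sym_sos n d"
  obtains gs where "set gs \<subseteq> forms n d" "f = sum_list (map (\<lambda>g. Sym n (g * g)) gs)"
proof -
  from assms obtain gs where gs: "set gs \<subseteq> forms n d" "f = sum_list (map (\<lambda>g. g * g) gs)"
    and f: "f \<in> sym_forms n (2 * d)" unfolding sym_sos_def by blast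
  have "f = sum_list (map (\<lambda>g. Sym n (g * g)) gs)"
    using Sym_sym_form[OF f] by (simp add: gs(2) Sym_sum_list o_def)
  with gs(1) show thesis ..
qed

subsection \<open>Linear functionals\<close>

lemma linear_on_zero: "PV.subspace V \<Longrightarrow> linear_on V l \<Longrightarrow> l 0 = 0"
  using PV.subspace_0[of V] unfolding linear_on_def by (metis PV.scale_zero_left mult_zero_left)

lemma linear_on_sum_list:
  assumes V: "PV.subspace V" and l: "linear_on V l"
  shows "set xs \<subseteq> V \<Longrightarrow> l (sum_list xs) = (\<Sum>x\<leftarrow>xs. l x)"
proof (induction xs)
  case Nil
  then show ?case using linear_on_zero[OF V l] by simp
next
  case (Cons x xs)
  then show ?case using l PV.subspace_sum_list[OF V, of xs] by (simp add: linear_on_def)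
qed

lemma linear_on_lincomb:
  "linear_on V f \<Longrightarrow> linear_on V g \<Longrightarrow> linear_on V (\<lambda>x. a * f x + b * g x)"
  by (simp add: linear_on_def algebra_simps)

lemma linear_imp_linear_on:
  assumes "Vector_Spaces.linear pscale (*) m"
  shows "linear_on V m"
proof -
  have "module_hom pscale (*) m" using assms by (simp add: module_hom_iff_linear)
  then show ?thesis by (simp add: linear_on_def module_hom.add module_hom.scale)
qed

lemma linear_on_vanishing_on_kernel:
  assumes V: "PV.subspace V" and \<phi>: "linear_on V \<phi>" and f0: "f0 \<in> V" "\<phi> f0 \<noteq> 0"
    and \<psi>: "linear_on V \<psi>" and van: "\<forall>f\<in>V. \<phi> f = 0 \<longrightarrow> \<psi> f = 0" and f: "f \<in> V"
  shows "\<psi> f = \<psi> f0 / \<phi> f0 * \<phi> f"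
proof -
  define c where "c = - (\<phi> f / \<phi> f0)"
  have cf0: "pscale c f0 \<in> V" and g: "f + pscale c f0 \<in> V"
    using PV.subspace_scale[OF V f0(1)] PV.subspace_add[OF V f] by auto
  have "\<phi> (f + pscale c f0) = \<phi> f + c * \<phi> f0"
    using \<phi> f cf0 f0(1) by (simp add: linear_on_def)
  then have "\<phi> (f + pscale c f0) = 0" using f0(2) by (simp add: c_def)
  then have "\<psi> (f + pscale c f0) = 0" using van g by blast
  then have "\<psi> f = - c * \<psi> f0" using \<psi> f cf0 f0(1) by (simp add: linear_on_def)
  then show ?thesis using f0(2) by (simp add: c_def field_simps)
qed

subsection \<open>The quadratic form of a functional\<close>

lemma dual_cone_iff:
  "l \<in> dual_cone n d \<longleftrightarrow>
     linear_on (sym_forms n (2 * d)) l \<and> (\<forall>g\<in>forms n d. 0 \<le> l (Sym n (g * g)))"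
proof
  assume "linear_on (sym_forms n (2 * d)) l \<and> (\<forall>g\<in>forms n d. 0 \<le> l (Sym n (g * g)))"
  then have lin: "linear_on (sym_forms n (2 * d)) l" and nn: "\<forall>g\<in>forms n d. 0 \<le> l (Sym n (g * g))"
    by auto
  have "0 \<le> l f" if f: "f \<in> sym_sos n d" for f
  proof -
    obtain gs where gs: "set gs \<subseteq> forms n d" "f = sum_list (map (\<lambda>g. Sym n (g * g)) gs)"
      using sym_sos_eq_sum_Sym_squares[OF f] by blast
    have "set (map (\<lambda>g. Sym n (g * g)) gs) \<subseteq> sym_forms n (2 * d)"
      using gs(1) by (auto intro: Sym_mult_in_sym_forms)
    then have "l f = (\<Sum>g\<leftarrow>gs. l (Sym n (g * g)))"
      using linear_on_sum_list[OF subspace_sym_forms lin] gs(2) by (simp add: o_def)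
    also have "\<dots> \<ge> 0" using gs(1) nn by (intro sum_list_nonneg) auto
    finally show ?thesis .
  qed
  then show "l \<in> dual_cone n d" using lin by (simp add: dual_cone_def)
qed (auto simp: dual_cone_def Sym_square_in_sym_sos)

lemma qform_symmetric_bilinear:
  assumes l: "linear_on (sym_forms n (2 * d)) l"
  shows "PV.symmetric_bilinear_on (forms n d) (\<lambda>p q. l (Sym n (p * q)))"
  unfolding PV.symmetric_bilinear_on_def
proof (intro conjI ballI allI)
  fix x y z assume x: "x \<in> forms n d" and y: "y \<in> forms n d" and z: "z \<in> forms n d"
  show "l (Sym n ((x + y) * z)) = l (Sym n (x * z)) + l (Sym n (y * z))"
    using l Sym_mult_in_sym_forms[OF x z] Sym_mult_in_sym_forms[OF y z]
    by (simp add: distrib_right Sym_add linear_on_def)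
  show "l (Sym n (x * y)) = l (Sym n (y * x))" by (simp add: mult.commute)
next
  fix c x z assume x: "x \<in> forms n d" and z: "z \<in> forms n d"
  show "l (Sym n (pscale c x * z)) = c * l (Sym n (x * z))"
    using l Sym_mult_in_sym_forms[OF x z] by (simp add: pscale_mult_left Sym_pscale linear_on_def)
qed

lemma qf_kernel_iff_isotropic:
  assumes "l \<in> dual_cone n d"
  shows "p \<in> qf_kernel n d l \<longleftrightarrow> p \<in> forms n d \<and> l (Sym n (p * p)) = 0"
  using PV.psd_isotropic_orthogonal[OF subspace_forms qform_symmetric_bilinear] assms
  by (auto simp: qf_kernel_def dual_cone_iff)

lemma Sym_mult_in_W2: "w \<in> W \<Longrightarrow> g \<in> forms n d \<Longrightarrow> Sym n (w * g) \<in> W2 n d W"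
  unfolding W2_def by (rule CollectI, rule exI[of _ "[(w, g)]"]) simp

lemma W2_subset_sym_forms:
  assumes "W \<subseteq> forms n d"
  shows "W2 n d W \<subseteq> sym_forms n (2 * d)"
proof
  fix x assume "x \<in> W2 n d W"
  then obtain fgs where x: "x = Sym n (sum_list (map (\<lambda>(f, g). f * g) fgs))"
    and fgs: "set fgs \<subseteq> W \<times> forms n d"
    unfolding W2_def by blast
  have "sum_list (map (\<lambda>(f, g). f * g) fgs) \<in> forms n (2 * d)"
    using fgs assms by (intro PV.subspace_sum_list[OF subspace_forms]) (auto intro!: forms_mult_same)
  then show "x \<in> sym_forms n (2 * d)" unfolding x by (rule Sym_in_sym_forms)
qed

lemma subspace_W2: "PV.subspace (W2 n d W)"
proof (rule PV.subspaceI)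
  show "0 \<in> W2 n d W" unfolding W2_def by (rule CollectI, rule exI[of _ "[]"]) simp
next
  fix x y assume "x \<in> W2 n d W" "y \<in> W2 n d W"
  then obtain fgs1 fgs2 where
    "x = Sym n (sum_list (map (\<lambda>(f, g). f * g) fgs1))" "set fgs1 \<subseteq> W \<times> forms n d"
    "y = Sym n (sum_list (map (\<lambda>(f, g). f * g) fgs2))" "set fgs2 \<subseteq> W \<times> forms n d"
    unfolding W2_def by blast
  then show "x + y \<in> W2 n d W"
    unfolding W2_def by (intro CollectI exI[of _ "fgs1 @ fgs2"]) (simp add: Sym_add)
next
  fix c x assume "x \<in> W2 n d W"
  then obtain fgs where fgs: "x = Sym n (sum_list (map (\<lambda>(f, g). f * g) fgs))" "set fgs \<subseteq> W \<times> forms n d"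
    unfolding W2_def by blast
  let ?fgs = "map (\<lambda>(f, g). (f, pscale c g)) fgs"
  have "pscale c x = Sym n (sum_list (map (\<lambda>(f, g). f * g) ?fgs))"
    unfolding fgs Sym_pscale[symmetric] pscale_sum_list
    by (simp add: o_def case_prod_beta pscale_mult_right)
  moreover have "set ?fgs \<subseteq> W \<times> forms n d"
    using fgs by (auto intro: PV.subspace_scale[OF subspace_forms])
  ultimately show "pscale c x \<in> W2 n d W" unfolding W2_def by blast
qed

lemma linear_on_vanishes_on_W2:
  assumes l: "linear_on (sym_forms n (2 * d)) l" and W: "W \<subseteq> forms n d"
    and van: "\<forall>w\<in>W. \<forall>g\<in>forms n d. l (Sym n (w * g)) = 0" and x: "x \<in> W2 n d W"
  shows "l x = 0"
proof -
  obtain fgs where x: "x = Sym n (sum_list (map (\<lambda>(f, g). f * g) fgs))" and fgs: "set fgs \<subseteq> W \<times> forms n d"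
    using x unfolding W2_def by blast
  have "x = (\<Sum>fg\<leftarrow>fgs. Sym n (fst fg * snd fg))"
    by (simp add: x Sym_sum_list o_def case_prod_beta)
  moreover have "set (map (\<lambda>fg. Sym n (fst fg * snd fg)) fgs) \<subseteq> sym_forms n (2 * d)"
    using fgs W by (auto intro!: Sym_mult_in_sym_forms)
  ultimately have "l x = (\<Sum>fg\<leftarrow>fgs. l (Sym n (fst fg * snd fg)))"
    using linear_on_sum_list[OF subspace_sym_forms l] by (simp add: o_def)
  also have "\<dots> = (\<Sum>fg\<leftarrow>fgs. 0)"
    using fgs van by (intro arg_cong[of _ _ sum_list] map_cong) auto
  finally show ?thesis by simp
qed

lemma qform_vanishes_on_W2:
  "l \<in> dual_cone n d \<Longrightarrow> x \<in> W2 n d (qf_kernel n d l) \<Longrightarrow> l x = 0"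
  by (rule linear_on_vanishes_on_W2) (auto simp: dual_cone_def qf_kernel_def)

lemma W2_eq_sym_forms_if_qform_zero:
  assumes "\<forall>p\<in>forms n d. \<forall>q\<in>forms n d. l (Sym n (p * q)) = 0"
  shows "W2 n d (qf_kernel n d l) = sym_forms n (2 * d)"
proof (rule equalityI)
  show "W2 n d (qf_kernel n d l) \<subseteq> sym_forms n (2 * d)"
    by (rule W2_subset_sym_forms) (auto simp: qf_kernel_def)
next
  show "sym_forms n (2 * d) \<subseteq> W2 n d (qf_kernel n d l)"
  proof
    fix h assume h: "h \<in> sym_forms n (2 * d)"
    then have "h \<in> forms n (2 * d)" by (simp add: sym_forms_def)
    then obtain fgs where fgs: "set fgs \<subseteq> forms n d \<times> forms n d" "h = sum_list (map (\<lambda>(f, g). f * g) fgs)"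
      by (rule forms_double_degree_sum_products)
    then have "h = Sym n (sum_list (map (\<lambda>(f, g). f * g) fgs))" using Sym_sym_form[OF h] by simp
    moreover have "set fgs \<subseteq> qf_kernel n d l \<times> forms n d" using fgs(1) assms by (auto simp: qf_kernel_def)
    ultimately show "h \<in> W2 n d (qf_kernel n d l)" unfolding W2_def by blast
  qed
qed

subsection \<open>Extreme rays\<close>

lemma qform_dominates_functional_vanishing_on_W2:
  assumes l: "l \<in> dual_cone n d" and m: "linear_on (sym_forms n (2 * d)) m"
    and m_W2: "\<forall>f\<in>W2 n d (qf_kernel n d l). m f = 0"
  obtains \<epsilon> where "\<epsilon> > 0" "\<And>g. g \<in> forms n d \<Longrightarrow> \<epsilon> * \<bar>m (Sym n (g * g))\<bar> \<le> l (Sym n (g * g))"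
proof -
  let ?Q = "\<lambda>p q. l (Sym n (p * q))"
  have Q: "PV.symmetric_bilinear_on (forms n d) ?Q" and psd: "\<forall>g\<in>forms n d. 0 \<le> ?Q g g"
    using l qform_symmetric_bilinear by (auto simp: dual_cone_iff)
  have iso: "\<forall>w\<in>forms n d. ?Q w w = 0 \<longrightarrow> (\<forall>g\<in>forms n d. m (Sym n (w * g)) = 0)"
    using m_W2 Sym_mult_in_W2 qf_kernel_iff_isotropic[OF l] by blast
  obtain es where es: "set es \<subseteq> forms n d" "forms n d \<subseteq> PV.span (set es)"
    using forms_finite_dimensional by blast
  obtain C where C: "C \<ge> 0" "\<forall>g\<in>PV.span (set es). \<bar>m (Sym n (g * g))\<bar> \<le> C * ?Q g g"
    using PV.psd_dominates_on_span[OF subspace_forms Q psd es(1) qform_symmetric_bilinear[OF m] iso]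
    by blast
  show thesis
  proof
    show "1 / (C + 1) > 0" using C(1) by simp
    fix g assume g: "g \<in> forms n d"
    have "\<bar>m (Sym n (g * g))\<bar> \<le> C * ?Q g g" using C(2) es(2) g by blast
    also have "\<dots> \<le> (C + 1) * ?Q g g" using psd g by (intro mult_right_mono) auto
    finally show "1 / (C + 1) * \<bar>m (Sym n (g * g))\<bar> \<le> ?Q g g"
      using C(1) by (simp add: field_simps)
  qed
qed

lemma extreme_ray_imp_hyperplane_W2:
  assumes l: "l \<in> dual_cone n d" and extreme: "extreme_ray (sym_forms n (2 * d)) (dual_cone n d) l"
  shows "hyperplane_in (sym_forms n (2 * d)) (W2 n d (qf_kernel n d l))"
proof -
  let ?V = "sym_forms n (2 * d)" and ?W2 = "W2 n d (qf_kernel n d l)"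
  have lin: "linear_on ?V l" using l by (simp add: dual_cone_def)
  have "{f \<in> ?V. l f = 0} \<subseteq> ?W2"
  proof (rule subsetI, rule ccontr)
    fix h assume h: "h \<in> {f \<in> ?V. l f = 0}" and h_W2: "h \<notin> ?W2"
    obtain m where m: "Vector_Spaces.linear pscale (*) m" "m h = 1" "\<And>f. f \<in> ?W2 \<Longrightarrow> m f = 0"
      using PV.exists_linear_functional_separating[OF subspace_W2 h_W2] by blast
    have m_lin: "linear_on ?V m" using linear_imp_linear_on[OF m(1)] .
    obtain \<epsilon> where \<epsilon>: "\<epsilon> > 0" "\<And>g. g \<in> forms n d \<Longrightarrow> \<epsilon> * \<bar>m (Sym n (g * g))\<bar> \<le> l (Sym n (g * g))"
      using qform_dominates_functional_vanishing_on_W2[OF l m_lin] m(3) by blast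
    define l1 where "l1 = (\<lambda>f. 1 / 2 * l f + \<epsilon> / 2 * m f)"
    define l2 where "l2 = (\<lambda>f. 1 / 2 * l f + - \<epsilon> / 2 * m f)"
    have "linear_on ?V l1" "linear_on ?V l2"
      unfolding l1_def l2_def by (rule linear_on_lincomb[OF lin m_lin])+
    moreover have "0 \<le> l1 (Sym n (g * g))" "0 \<le> l2 (Sym n (g * g))" if "g \<in> forms n d" for g
    proof -
      have "\<bar>\<epsilon> * m (Sym n (g * g))\<bar> \<le> l (Sym n (g * g))"
        using \<epsilon> that by (simp add: abs_mult)
      then show "0 \<le> l1 (Sym n (g * g))" "0 \<le> l2 (Sym n (g * g))"
        unfolding l1_def l2_def abs_le_iff by linarith+
    qed
    ultimately have "l1 \<in> dual_cone n d" "l2 \<in> dual_cone n d"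
      by (simp_all add: dual_cone_iff)
    moreover have "\<forall>f\<in>?V. l f = l1 f + l2 f" by (simp add: l1_def l2_def)
    ultimately obtain c where "\<forall>f\<in>?V. l1 f = c * l f"
      using extreme unfolding extreme_ray_def by blast
    then show False using h m(2) \<epsilon>(1) by (auto simp: l1_def)
  qed
  moreover have "?W2 \<subseteq> {f \<in> ?V. l f = 0}"
    using W2_subset_sym_forms[of "qf_kernel n d l"] qform_vanishes_on_W2[OF l]
    by (auto simp: qf_kernel_def)
  ultimately show ?thesis
    using lin extreme unfolding hyperplane_in_def extreme_ray_def by blast
qed

lemma hyperplane_W2_imp_extreme_ray:
  assumes l: "l \<in> dual_cone n d" and hyp: "hyperplane_in (sym_forms n (2 * d)) (W2 n d (qf_kernel n d l))"
  shows "extreme_ray (sym_forms n (2 * d)) (dual_cone n d) l"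
proof -
  let ?V = "sym_forms n (2 * d)" and ?W = "qf_kernel n d l"
  obtain \<phi> f0 where \<phi>: "linear_on ?V \<phi>" and f0: "f0 \<in> ?V" "\<phi> f0 \<noteq> 0"
    and W2_eq: "W2 n d ?W = {f \<in> ?V. \<phi> f = 0}"
    using hyp unfolding hyperplane_in_def by blast
  have W_forms: "?W \<subseteq> forms n d" by (auto simp: qf_kernel_def)
  have proportional: "\<forall>f\<in>?V. l' f = l' f0 / \<phi> f0 * \<phi> f"
    if l': "l' \<in> dual_cone n d" "\<forall>w\<in>?W. l' (Sym n (w * w)) = 0" for l'
  proof -
    have lin': "linear_on ?V l'" using l'(1) by (simp add: dual_cone_def)
    have "\<forall>w\<in>?W. \<forall>g\<in>forms n d. l' (Sym n (w * g)) = 0"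
      using l' W_forms qf_kernel_iff_isotropic[OF l'(1)] by (auto simp: qf_kernel_def)
    then have "\<forall>f\<in>?V. \<phi> f = 0 \<longrightarrow> l' f = 0"
      using linear_on_vanishes_on_W2[OF lin' W_forms] W2_eq by blast
    then show ?thesis
      using linear_on_vanishing_on_kernel[OF subspace_sym_forms \<phi> f0 lin'] by blast
  qed
  have l_prop: "\<forall>f\<in>?V. l f = l f0 / \<phi> f0 * \<phi> f"
    using proportional[OF l] by (auto simp: qf_kernel_def)
  have "\<exists>g\<in>forms n d. l (Sym n (g * g)) \<noteq> 0"
  proof (rule ccontr)
    assume "\<not> ?thesis"
    then have "\<forall>p\<in>forms n d. \<forall>q\<in>forms n d. l (Sym n (p * q)) = 0"
      using qf_kernel_iff_isotropic[OF l] by (auto simp: qf_kernel_def)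
    then show False
      using W2_eq_sym_forms_if_qform_zero W2_eq f0 by blast
  qed
  then obtain g where g: "g \<in> forms n d" "l (Sym n (g * g)) \<noteq> 0" by blast
  have g_V: "Sym n (g * g) \<in> ?V" using Sym_mult_in_sym_forms[OF g(1) g(1)] .
  have l_g: "0 < l (Sym n (g * g))" using l g by (simp add: dual_cone_iff order_less_le)
  have "l f0 / \<phi> f0 \<noteq> 0" using l_prop g(2) g_V by fastforce
  show ?thesis
    unfolding extreme_ray_def
  proof (intro conjI ballI impI)
    show "\<exists>f\<in>?V. l f \<noteq> 0" using g(2) g_V by blast
    fix l1 l2 assume l1: "l1 \<in> dual_cone n d" and l2: "l2 \<in> dual_cone n d"
      and sum: "\<forall>f\<in>?V. l f = l1 f + l2 f"
    have "l1 (Sym n (w * w)) = 0" if w: "w \<in> ?W" for w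
    proof -
      have "w \<in> forms n d" "l (Sym n (w * w)) = 0" using w by (auto simp: qf_kernel_def)
      moreover from this(1) have "0 \<le> l1 (Sym n (w * w))" "0 \<le> l2 (Sym n (w * w))"
        using l1 l2 by (simp_all add: dual_cone_iff)
      ultimately show ?thesis using sum Sym_mult_in_sym_forms by fastforce
    qed
    then have l1_prop: "\<forall>f\<in>?V. l1 f = l1 f0 / \<phi> f0 * \<phi> f" using proportional[OF l1] by blast
    define c where "c = (l1 f0 / \<phi> f0) / (l f0 / \<phi> f0)"
    have l1_c: "\<forall>f\<in>?V. l1 f = c * l f"
      using l1_prop l_prop \<open>l f0 / \<phi> f0 \<noteq> 0\<close> by (simp add: c_def)
    have "0 \<le> l1 (Sym n (g * g))" using l1 g(1) by (simp add: dual_cone_iff)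
    then have "0 \<le> c * l (Sym n (g * g))" using l1_c g_V by simp
    then have "c \<ge> 0" using l_g by (simp add: zero_le_mult_iff)
    with l1_c show "\<exists>c\<ge>0. \<forall>f\<in>?V. l1 f = c * l f" by blast
  qed (rule l)
qed

theorem corollary6p6:
  fixes n d :: nat and l :: "rpoly \<Rightarrow> real"
  assumes "l \<in> dual_cone n d"
  shows "extreme_ray (sym_forms n (2*d)) (dual_cone n d) l \<longleftrightarrow>
         hyperplane_in (sym_forms n (2*d)) (W2 n d (qf_kernel n d l))"
  using extreme_ray_imp_hyperplane_W2[OF assms] hyperplane_W2_imp_extreme_ray[OF assms] by blast

end
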